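(* Let $f: \mathbb{R}^n \to \mathbb{R}^n$ be topical and $x \in \mathbb{R}^n$. There exists $1 \le i \le n$ such that for all $k \in \mathbb{N}$, $x_i + k\,\overline{\chi}(f) \le f^k_i(x)$.
   Context: $f$ is topical if $f(x+h) = f(x)+h$ for all $h\in\mathbb{R}$ (scalar added to each coordinate) and $x\le y$ componentwise implies $f(x)\le f(y)$. The upper cycle time is $\overline{\chi}(f) = \lim_{k\to\infty} \max_i f^k_i(x)/k$, which exists and is independent of $x$. *)

theory Defs
  imports "HOL-Analysis.Analysis"
begin

definition topical :: "(real^'n \<Rightarrow> real^'n) \<Rightarrow> bool" where
  "topical f \<longleftrightarrow>
     (\<forall>x (h::real). f (x + (\<chi> i. h)) = f x + (\<chi> i. h)) \<and>
     (\<forall>x y. (\<forall>i. x $ i \<le> y $ i) \<longrightarrow> (\<forall>i. f x $ i \<le> f y $ i))"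

definition upper_cycle_time :: "(real^'n \<Rightarrow> real^'n) \<Rightarrow> real" where
  "upper_cycle_time f =
     (THE c. \<forall>x. (\<lambda>k::nat. Max (range (\<lambda>i. (f ^^ k) x $ i)) / real k) \<longlonglongrightarrow> c)"

end

theory Submission
  imports Defs
begin

text \<open>
  Let \<open>c k = max\<^sub>i ((f^^k) x - x)\<^sub>i\<close>. Topical maps are nonexpansive for the sup-norm,
  so \<open>c\<close> is subadditive and bounded below by a linear function. By Fekete's lemma
  \<open>c k / k\<close> converges to \<open>L = inf\<^sub>k c k / k\<close>, so \<open>c k \<ge> k L\<close>; nonexpansiveness also
  shows that the limit does not depend on \<open>x\<close>, i.e. \<open>L\<close> is the upper cycle time.

  Suppose every coordinate \<open>i\<close> falls below \<open>x\<^sub>i + k L\<close> by at least \<open>\<epsilon> > 0\<close> at some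
  time \<open>k\<^sub>i\<close>. Splitting \<open>f^^m = f^^k\<^sub>i \<circ> f^^(m - k\<^sub>i)\<close> at a coordinate \<open>i\<close> attaining
  \<open>c m\<close> shows that the nonnegative defect \<open>c m - m L\<close> drops by \<open>\<epsilon>\<close> within at most
  \<open>max\<^sub>i k\<^sub>i\<close> steps, which is absurd.
\<close>

lemma subadditive_mult_add_le:
  fixes a :: "nat \<Rightarrow> real"
  assumes sub: "\<And>m n. a (m + n) \<le> a m + a n"
  shows "a (q * m + r) \<le> real q * a m + a r"
proof (induction q)
  case 0
  then show ?case by simp
next
  case (Suc q)
  have "a (Suc q * m + r) = a (m + (q * m + r))" by (simp add: algebra_simps)
  also have "\<dots> \<le> a m + a (q * m + r)" by (rule sub)
  also have "\<dots> \<le> real (Suc q) * a m + a r" using Suc by (simp add: algebra_simps)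
  finally show ?case .
qed

lemma subadditive_quotient_le:
  fixes a :: "nat \<Rightarrow> real"
  assumes sub: "\<And>m n. a (m + n) \<le> a m + a n" and "m \<ge> 1"
  obtains C where "\<And>n. n \<ge> 1 \<Longrightarrow> a n / real n \<le> a m / real m + C / real n"
proof
  define C where "C = \<bar>a m\<bar> + \<bar>a 0\<bar> + real m * \<bar>a 1\<bar>"
  fix n :: nat
  assume "n \<ge> 1"
  define q r where "q = n div m" and "r = n mod m"
  have n_eq: "n = q * m + r" and "r < m"
    using \<open>m \<ge> 1\<close> by (simp_all add: q_def r_def)
  have "a r \<le> real r * a 1 + a 0"
    using subadditive_mult_add_le[OF sub, of r 1 0] by simp
  also have "\<dots> \<le> real m * \<bar>a 1\<bar> + \<bar>a 0\<bar>"
  proof -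
    have "real r * a 1 \<le> real r * \<bar>a 1\<bar>" by (simp add: mult_left_mono)
    also have "\<dots> \<le> real m * \<bar>a 1\<bar>" using \<open>r < m\<close> by (simp add: mult_right_mono)
    finally show ?thesis by simp
  qed
  finally have a_r: "a r \<le> real m * \<bar>a 1\<bar> + \<bar>a 0\<bar>" .
  have "real r * (a m / real m) \<ge> - \<bar>a m\<bar>"
  proof -
    have "\<bar>real r * (a m / real m)\<bar> = real r / real m * \<bar>a m\<bar>"
      by (simp add: abs_mult)
    also have "\<dots> \<le> \<bar>a m\<bar>"
      using \<open>r < m\<close> by (intro mult_left_le_one_le) auto
    finally show ?thesis by linarith
  qed
  moreover have "real q * a m = real n * (a m / real m) - real r * (a m / real m)"
    using \<open>m \<ge> 1\<close> n_eq by (simp add: field_simps)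
  moreover have "a n \<le> real q * a m + a r"
    using n_eq subadditive_mult_add_le[OF sub, of q m r] by simp
  ultimately have "a n \<le> real n * (a m / real m) + C"
    using a_r unfolding C_def by linarith
  then show "a n / real n \<le> a m / real m + C / real n"
    using \<open>n \<ge> 1\<close> by (simp add: field_simps)
qed

lemma fekete_subadditive:
  fixes a :: "nat \<Rightarrow> real"
  assumes sub: "\<And>m n. a (m + n) \<le> a m + a n" and low: "\<And>n. real n * d \<le> a n"
  shows "\<exists>L. (\<lambda>n. a n / real n) \<longlonglongrightarrow> L \<and> (\<forall>n. real n * L \<le> a n)"
proof (intro exI conjI allI)
  define S where "S = (\<lambda>n. a n / real n) ` {1..}"
  have "bdd_below S"
    unfolding S_def bdd_below_def using low by (auto simp: le_divide_eq mult.commute)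
  then have Inf_le: "Inf S \<le> a n / real n" if "n \<ge> 1" for n
    using that by (intro cInf_lower) (auto simp: S_def)
  show "real n * Inf S \<le> a n" for n
  proof (cases "n = 0")
    case True
    then show ?thesis using sub[of 0 0] by simp
  next
    case False
    then show ?thesis using Inf_le[of n] by (simp add: field_simps)
  qed
  show "(\<lambda>n. a n / real n) \<longlonglongrightarrow> Inf S"
  proof (rule order_tendstoI)
    fix y assume "y < Inf S"
    then show "\<forall>\<^sub>F n in sequentially. y < a n / real n"
      using Inf_le by (intro eventually_sequentiallyI[of 1]) (auto intro: less_le_trans)
  next
    fix y assume "Inf S < y"
    then obtain m where "m \<ge> 1" and m: "a m / real m < y"
      using cInf_less_iff[OF _ \<open>bdd_below S\<close>] by (auto simp: S_def)
    obtain C where C: "\<And>n. n \<ge> 1 \<Longrightarrow> a n / real n \<le> a m / real m + C / real n"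
      using subadditive_quotient_le[OF sub \<open>m \<ge> 1\<close>] by blast
    have "(\<lambda>n. a m / real m + C / real n) \<longlonglongrightarrow> a m / real m + 0"
      using tendsto_divide_0[OF tendsto_const filterlim_at_top_imp_at_infinity[OF filterlim_real_sequentially]]
      by (intro tendsto_add tendsto_const)
    then have "\<forall>\<^sub>F n in sequentially. a m / real m + C / real n < y"
      using m by (simp add: order_tendstoD(2))
    then show "\<forall>\<^sub>F n in sequentially. a n / real n < y"
      using eventually_ge_at_top[of 1] by eventually_elim (use C in force)
  qed
qed

definition max_coord :: "real^'n \<Rightarrow> real" where
  "max_coord y = Max (range (\<lambda>i. y $ i))"

lemma max_coord_ge: "y $ i \<le> max_coord y"
  unfolding max_coord_def by (rule Max_ge) auto

lemma max_coord_le: "(\<And>i. y $ i \<le> c) \<Longrightarrow> max_coord y \<le> c"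
  unfolding max_coord_def by (auto intro: Max.boundedI)

lemma max_coord_attained: "\<exists>i. max_coord y = y $ i"
proof -
  have "max_coord y \<in> range (\<lambda>i. y $ i)"
    unfolding max_coord_def by (rule Max_in) auto
  then show ?thesis by auto
qed

lemma max_coord_le_add: "max_coord y \<le> max_coord z + max_coord (y - z)"
proof (rule max_coord_le)
  fix i
  show "y $ i \<le> max_coord z + max_coord (y - z)"
    using max_coord_ge[of z i] max_coord_ge[of "y - z" i] by simp
qed

lemma topical_add_const: "topical f \<Longrightarrow> f (x + (\<chi> i. h)) = f x + (\<chi> i. h)"
  unfolding topical_def by blast

lemma topical_mono: "topical f \<Longrightarrow> (\<And>i. x $ i \<le> y $ i) \<Longrightarrow> f x $ i \<le> f y $ i"
  unfolding topical_def by blast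

lemma topical_funpow:
  assumes "topical f"
  shows "topical (f ^^ k)"
proof (induction k)
  case 0
  then show ?case unfolding topical_def by simp
next
  case (Suc k)
  show ?case unfolding topical_def
  proof (intro conjI allI impI)
    fix x :: "real^'a" and h :: real
    show "(f ^^ Suc k) (x + (\<chi> i. h)) = (f ^^ Suc k) x + (\<chi> i. h)"
      using topical_add_const[OF Suc] topical_add_const[OF assms] by simp
  next
    fix x y :: "real^'a" and i
    assume "\<forall>i. x $ i \<le> y $ i"
    then have "(f ^^ k) x $ j \<le> (f ^^ k) y $ j" for j
      using topical_mono[OF Suc] by blast
    then show "(f ^^ Suc k) x $ i \<le> (f ^^ Suc k) y $ i"
      using topical_mono[OF assms] by simp
  qed
qed

lemma topical_le_add_max_coord:
  assumes "topical f"
  shows "f y $ i \<le> f z $ i + max_coord (y - z)"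
proof -
  have "y $ j \<le> (z + (\<chi> i. max_coord (y - z))) $ j" for j
    using max_coord_ge[of "y - z" j] by simp
  then have "f y $ i \<le> f (z + (\<chi> i. max_coord (y - z))) $ i"
    by (rule topical_mono[OF assms])
  then show ?thesis using topical_add_const[OF assms] by simp
qed

lemma topical_max_coord_le:
  assumes "topical f"
  shows "max_coord (f y) \<le> max_coord (f z) + max_coord (y - z)"
  using topical_le_add_max_coord[OF assms] max_coord_ge
  by (meson add_right_mono max_coord_le order_trans)

lemma topical_funpow_add_le:
  assumes "topical f"
  shows "(f ^^ (m + n)) x $ i \<le> (f ^^ m) x $ i + max_coord ((f ^^ n) x - x)"
  using topical_le_add_max_coord[OF topical_funpow[OF assms]] by (simp add: funpow_add)

lemma topical_max_coord_funpow_subadditive: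
  assumes "topical f"
  shows "max_coord ((f ^^ (m + n)) x - x)
    \<le> max_coord ((f ^^ m) x - x) + max_coord ((f ^^ n) x - x)"
proof (rule max_coord_le)
  fix i
  show "((f ^^ (m + n)) x - x) $ i \<le> max_coord ((f ^^ m) x - x) + max_coord ((f ^^ n) x - x)"
    using topical_funpow_add_le[OF assms, of m n x i] max_coord_ge[of "(f ^^ m) x - x" i]
    by simp
qed

lemma topical_funpow_lower:
  assumes "topical f" and step: "\<And>j. x $ j - d \<le> f x $ j"
  shows "x $ i - real k * d \<le> (f ^^ k) x $ i"
proof (induction k arbitrary: i)
  case 0
  then show ?case by simp
next
  case (Suc k)
  have "f x $ i - real k * d = f (x + (\<chi> j. - (real k * d))) $ i"
    using topical_add_const[OF assms(1)] by simp
  also have "\<dots> \<le> (f ^^ Suc k) x $ i"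
    using Suc.IH by (simp add: topical_mono[OF assms(1)])
  finally show ?case using step[of i] by (simp add: algebra_simps)
qed

lemma topical_max_coord_funpow_lower:
  assumes "topical f"
  shows "real k * - max_coord (x - f x) \<le> max_coord ((f ^^ k) x - x)"
proof -
  have "x $ j - max_coord (x - f x) \<le> f x $ j" for j
    using max_coord_ge[of "x - f x" j] by simp
  then have "real k * - max_coord (x - f x) \<le> ((f ^^ k) x - x) $ i" for i
    using topical_funpow_lower[OF assms, of x "max_coord (x - f x)" i k] by simp
  then show ?thesis using max_coord_ge order_trans by blast
qed

lemma LIMSEQ_divide_real_bounded_diff:
  fixes a b :: "nat \<Rightarrow> real"
  assumes lim: "(\<lambda>k. a k / real k) \<longlonglongrightarrow> L" and bounded: "\<And>k. \<bar>b k - a k\<bar> \<le> B"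
  shows "(\<lambda>k. b k / real k) \<longlonglongrightarrow> L"
proof -
  have "(\<lambda>k. (b k - a k) / real k) \<longlonglongrightarrow> 0"
  proof (rule Lim_null_comparison)
    show "\<forall>\<^sub>F k in sequentially. norm ((b k - a k) / real k) \<le> B * (1 / real k)"
      using bounded by (auto intro!: always_eventually simp: divide_right_mono)
    show "(\<lambda>k. B * (1 / real k)) \<longlonglongrightarrow> 0"
      by (rule tendsto_mult_right_zero[OF lim_inverse_n'])
  qed
  from tendsto_add[OF lim this] show ?thesis
    by (simp add: add_divide_distrib[symmetric])
qed

lemma upper_cycle_time_eqI:
  assumes "topical f" and lim: "(\<lambda>k. max_coord ((f ^^ k) x - x) / real k) \<longlonglongrightarrow> L"
  shows "upper_cycle_time f = L"
proof -
  have lim_z: "(\<lambda>k. max_coord ((f ^^ k) z) / real k) \<longlonglongrightarrow> L" for z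
  proof (rule LIMSEQ_divide_real_bounded_diff[OF lim])
    fix k
    have "max_coord ((f ^^ k) z) \<le> max_coord ((f ^^ k) x) + max_coord (z - x)"
      and "max_coord ((f ^^ k) x) \<le> max_coord ((f ^^ k) z) + max_coord (x - z)"
      using topical_max_coord_le[OF topical_funpow[OF assms(1)]] by blast+
    moreover have "max_coord ((f ^^ k) x) \<le> max_coord ((f ^^ k) x - x) + max_coord x"
      using max_coord_le_add[of "(f ^^ k) x" "(f ^^ k) x - x"] by simp
    moreover have "max_coord ((f ^^ k) x - x) \<le> max_coord ((f ^^ k) x) + max_coord (- x)"
      using max_coord_le_add[of "(f ^^ k) x - x" "(f ^^ k) x"] by simp
    ultimately show "\<bar>max_coord ((f ^^ k) z) - max_coord ((f ^^ k) x - x)\<bar>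
      \<le> \<bar>max_coord (z - x)\<bar> + \<bar>max_coord x\<bar> + \<bar>max_coord (x - z)\<bar> + \<bar>max_coord (- x)\<bar>"
      by linarith
  qed
  show ?thesis
    unfolding upper_cycle_time_def max_coord_def[symmetric]
    using lim_z LIMSEQ_unique by blast
qed

lemma bdd_below_no_uniform_descent:
  fixes C :: "nat \<Rightarrow> real"
  assumes "eps > 0" and descent: "\<And>m. m \<ge> M \<Longrightarrow> \<exists>j\<in>{1..M}. C m \<le> C (m - j) - eps"
  shows "\<not> bdd_below (range C)"
proof
  assume "bdd_below (range C)"
  then obtain B where B: "\<And>m. B \<le> C m" by (auto simp: bdd_below_def)
  have "M \<ge> 1" using descent[of M] by auto
  define A where "A = Max (C ` {..<M})"
  have bound: "C m \<le> A - eps * real (m div M)" for m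
  proof (induction m rule: less_induct)
    case (less m)
    show ?case
    proof (cases "m < M")
      case True
      then show ?thesis unfolding A_def by (simp add: Max_ge)
    next
      case False
      then obtain j where j: "1 \<le> j" "j \<le> M" and Cm: "C m \<le> C (m - j) - eps"
        using descent[of m] by (metis atLeastAtMost_iff not_less)
      have "m div M = Suc ((m - M) div M)"
        using False \<open>M \<ge> 1\<close> by (simp add: le_div_geq)
      moreover have "(m - M) div M \<le> (m - j) div M"
        using j by (simp add: div_le_mono)
      ultimately have "eps * real (m div M) \<le> eps * real ((m - j) div M) + eps"
        using \<open>eps > 0\<close> by (simp add: distrib_left)
      then show ?thesis using less[of "m - j"] j False Cm by simp
    qed
  qed
  obtain N :: nat where "real N > (A - B) / eps"
    using reals_Archimedean2 by blast
  then have "A - eps * real N < B" using \<open>eps > 0\<close> by (simp add: field_simps)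
  then show False using bound[of "M * N"] B[of "M * N"] \<open>M \<ge> 1\<close> by simp
qed

lemma topical_coordinate_ge_linear:
  assumes "topical f" and L: "\<And>n. real n * L \<le> max_coord ((f ^^ n) x - x)"
  shows "\<exists>i. \<forall>k. x $ i + real k * L \<le> (f ^^ k) x $ i"
proof (rule ccontr)
  assume "\<not> ?thesis"
  then obtain kk where kk: "\<And>i. (f ^^ kk i) x $ i < x $ i + real (kk i) * L"
    by (metis not_le)
  define C where "C m = max_coord ((f ^^ m) x - x) - real m * L" for m
  define eps where "eps = Min (range (\<lambda>i. x $ i + real (kk i) * L - (f ^^ kk i) x $ i))"
  define M where "M = Max (range kk)"
  have "eps > 0"
    unfolding eps_def using kk by (subst Min_gr_iff) auto
  have eps_le: "eps \<le> x $ i + real (kk i) * L - (f ^^ kk i) x $ i" for i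
    unfolding eps_def by (rule Min_le) auto
  have "kk i \<ge> 1" for i
    using kk[of i] by (cases "kk i") auto
  moreover have "kk i \<le> M" for i
    unfolding M_def by (rule Max_ge) auto
  moreover have "C m \<le> C (m - kk i) - eps" if "max_coord ((f ^^ m) x - x) = ((f ^^ m) x - x) $ i"
    and "kk i \<le> m" for i m
  proof -
    have "(f ^^ m) x $ i \<le> (f ^^ kk i) x $ i + max_coord ((f ^^ (m - kk i)) x - x)"
      using topical_funpow_add_le[OF assms(1), of "kk i" "m - kk i" x i] \<open>kk i \<le> m\<close> by simp
    then show ?thesis
      using that eps_le[of i] unfolding C_def by (simp add: algebra_simps of_nat_diff)
  qed
  ultimately have "\<exists>j\<in>{1..M}. C m \<le> C (m - j) - eps" if "m \<ge> M" for m
    using max_coord_attained[of "(f ^^ m) x - x"] that by (meson atLeastAtMost_iff le_trans)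
  then have "\<not> bdd_below (range C)"
    by (rule bdd_below_no_uniform_descent[OF \<open>eps > 0\<close>])
  moreover have "bdd_below (range C)"
    using L by (intro bdd_belowI[of _ 0]) (auto simp: C_def)
  ultimately show False by contradiction
qed

theorem theorem2p4:
  fixes f :: "real^'n \<Rightarrow> real^'n" and x :: "real^'n"
  assumes "topical f"
  shows "\<exists>i. \<forall>k::nat. x $ i + real k * upper_cycle_time f \<le> (f ^^ k) x $ i"
proof -
  obtain L where lim: "(\<lambda>n. max_coord ((f ^^ n) x - x) / real n) \<longlonglongrightarrow> L"
    and L: "\<And>n. real n * L \<le> max_coord ((f ^^ n) x - x)"
    using fekete_subadditive[OF topical_max_coord_funpow_subadditive[OF assms]
        topical_max_coord_funpow_lower[OF assms]]
    by blast
  have "upper_cycle_time f = L"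
    using upper_cycle_time_eqI[OF assms lim] .
  then show ?thesis
    using topical_coordinate_ge_linear[OF assms L] by simp
qed

end
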